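(* Let $G$ be a cubical $\omega$-category with connections. The family of sets $\Phi_n(G_n)$ ($n\ge0$) is closed under all face maps $\partial^\alpha_i$ and under $\varepsilon_1$ (i.e. $\partial^\alpha_i$ maps $\Phi_n(G_n)$ into $\Phi_{n-1}(G_{n-1})$ and $\varepsilon_1$ maps $\Phi_n(G_n)$ into $\Phi_{n+1}(G_{n+1})$). Each set $\Phi_n(G_n)$ is closed under $\varepsilon_i\partial^\alpha_i$ and under $\circ_i$ (whenever the composite is defined in $G_n$) for $1\le i\le n$.
   Context: A cubical $\omega$-category with connections $G$ consists of sets $G_n$ ($n\ge0$), face maps $\partial^\alpha_i:G_n\to G_{n-1}$, degeneracies $\varepsilon_i:G_{n-1}\to G_n$, connections $\Gamma^\alpha_i:G_n\to G_{n+1}$ ($1\le i\le n$, $\alpha=\pm$) and partial compositions $\circ_j$ on $G_n$ ($1\le j\le n$, $a\circ_jb$ defined iff $\partial^+_ja=\partial^-_jb$) satisfying: $\partial^\alpha_i\partial^\beta_j=\partial^\beta_{j-1}\partial^\alpha_i$ ($i<j$), $\varepsilon_i\varepsilon_j=\varepsilon_{j+1}\varepsilon_i$ ($i\le j$), $\partial^\alpha_i\varepsilon_j=\varepsilon_{j-1}\partial^\alpha_i$ ($i<j$), $\varepsilon_j\partial^\alpha_{i-1}$ ($i>j$), $\mathrm{id}$ ($i=j$); $\Gamma^\alpha_i\Gamma^\beta_j=\Gamma^\beta_{j+1}\Gamma^\alpha_i$ ($i<j$), $\Gamma^\alpha_i\Gamma^\alpha_i=\Gamma^\alpha_{i+1}\Gamma^\alpha_i$,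 $\Gamma^\alpha_i\varepsilon_j=\varepsilon_{j+1}\Gamma^\alpha_i$ ($i<j$), $\varepsilon_j\Gamma^\alpha_{i-1}$ ($i>j$), $\Gamma^\alpha_j\varepsilon_j=\varepsilon_{j+1}\varepsilon_j$, $\partial^\alpha_i\Gamma^\beta_j=\Gamma^\beta_{j-1}\partial^\alpha_i$ ($i<j$), $\Gamma^\beta_j\partial^\alpha_{i-1}$ ($i>j+1$), $\partial^\alpha_j\Gamma^\alpha_j=\partial^\alpha_{j+1}\Gamma^\alpha_j=\mathrm{id}$, $\partial^\alpha_j\Gamma^{-\alpha}_j=\partial^\alpha_{j+1}\Gamma^{-\alpha}_j=\varepsilon_j\partial^\alpha_j$; $\partial^-_j(a\circ_jb)=\partial^-_ja$, $\partial^+_j(a\circ_jb)=\partial^+_jb$, $\partial^\alpha_i(a\circ_jb)=\partial^\alpha_ia\circ_{j-1}\partial^\alpha_ib$ ($i<j$), $\partial^\alpha_ia\circ_j\partial^\alpha_ib$ ($i>j$); interchange for $i\ne j$; $\varepsilon_i(a\circ_jb)=\varepsilon_ia\circ_{j+1}\varepsilon_ib$ ($i\le j$), $\varepsilon_ia\circ_j\varepsilon_ib$ ($i>j$); $\Gamma^\alpha_i(a\circ_jb)=\Gamma^\alpha_ia\circ_{j+1}\Gamma^\alpha_ib$ ($i<j$), $\Gamma^\alpha_ia\circ_j\Gamma^\alpha_ib$ ($i>j$); $\Gamma^+_j(a\circ_jb)=(\Gamma^+_ja\circ_j\varepsilon_ja)\circ_{j+1}(\varepsilon_{j+1}a\circ_j\Gamma^+_jb)$,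 $\Gamma^-_j(a\circ_jb)=(\Gamma^-_ja\circ_j\varepsilon_{j+1}b)\circ_{j+1}(\varepsilon_jb\circ_j\Gamma^-_jb)$; each $\circ_j$ is a category structure with identities $\varepsilon_jy$; $\Gamma^+_ix\circ_i\Gamma^-_ix=\varepsilon_{i+1}x$, $\Gamma^+_ix\circ_{i+1}\Gamma^-_ix=\varepsilon_ix$. Folding operations on $G_n$: $\psi_ix=\Gamma^+_i\partial^-_{i+1}x\circ_{i+1}x\circ_{i+1}\Gamma^-_i\partial^+_{i+1}x$ ($1\le i\le n-1$), $\Psi_r=\psi_{r-1}\cdots\psi_1$, $\Phi_n=\Psi_1\Psi_2\cdots\Psi_n$. *)

theory Defs
  imports Main
begin

text \<open>Conventions (alpha :: bool, True = +, False = -):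
  \<^item> cell n            = G_n
  \<^item> face n i a x      = \<partial>^a_i x      for x in G_n, 1 <= i <= n, lands in G_(n-1)
  \<^item> degen n i x       = \<epsilon>_i x        for x in G_n, 1 <= i <= n+1, lands in G_(n+1)
  \<^item> conn n i a x      = \<Gamma>^a_i x      for x in G_n, 1 <= i <= n, lands in G_(n+1)
  \<^item> comp n j a b      = a \<circ>_j b     for a,b in G_n, 1 <= j <= n,
                          defined iff face n j True a = face n j False b\<close>

record 'a cubical =
  cell  :: "nat \<Rightarrow> 'a set"
  face  :: "nat \<Rightarrow> nat \<Rightarrow> bool \<Rightarrow> 'a \<Rightarrow> 'a"
  degen :: "nat \<Rightarrow> nat \<Rightarrow> 'a \<Rightarrow> 'a"
  conn  :: "nat \<Rightarrow> nat \<Rightarrow> bool \<Rightarrow> 'a \<Rightarrow> 'a"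
  comp  :: "nat \<Rightarrow> nat \<Rightarrow> 'a \<Rightarrow> 'a \<Rightarrow> 'a"

definition composable :: "'a cubical \<Rightarrow> nat \<Rightarrow> nat \<Rightarrow> 'a \<Rightarrow> 'a \<Rightarrow> bool" where
  "composable G n j a b \<longleftrightarrow> a \<in> cell G n \<and> b \<in> cell G n \<and> 1 \<le> j \<and> j \<le> n \<and>
     face G n j True a = face G n j False b"

definition cub_closed :: "'a cubical \<Rightarrow> bool" where
  "cub_closed G \<longleftrightarrow>
    (\<forall>n i a x. x \<in> cell G n \<and> 1 \<le> i \<and> i \<le> n \<longrightarrow> face G n i a x \<in> cell G (n - 1)) \<and>
    (\<forall>n i x. x \<in> cell G n \<and> 1 \<le> i \<and> i \<le> Suc n \<longrightarrow> degen G n i x \<in> cell G (Suc n)) \<and>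
    (\<forall>n i a x. x \<in> cell G n \<and> 1 \<le> i \<and> i \<le> n \<longrightarrow> conn G n i a x \<in> cell G (Suc n)) \<and>
    (\<forall>n j a b. composable G n j a b \<longrightarrow> comp G n j a b \<in> cell G n)"

definition cub_face_degen :: "'a cubical \<Rightarrow> bool" where
  "cub_face_degen G \<longleftrightarrow>
    \<comment> \<open>\<partial>^a_i \<partial>^b_j = \<partial>^b_(j-1) \<partial>^a_i, i < j\<close>
    (\<forall>n i j a b x. x \<in> cell G n \<and> 1 \<le> i \<and> i < j \<and> j \<le> n \<longrightarrow>
       face G (n - 1) i a (face G n j b x) = face G (n - 1) (j - 1) b (face G n i a x)) \<and>
    \<comment> \<open>\<epsilon>_i \<epsilon>_j = \<epsilon>_(j+1) \<epsilon>_i, i \<le> j\<close>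
    (\<forall>n i j x. x \<in> cell G n \<and> 1 \<le> i \<and> i \<le> j \<and> j \<le> Suc n \<longrightarrow>
       degen G (Suc n) i (degen G n j x) = degen G (Suc n) (Suc j) (degen G n i x)) \<and>
    \<comment> \<open>\<partial>^a_i \<epsilon>_j\<close>
    (\<forall>n i j a x. x \<in> cell G n \<and> 1 \<le> i \<and> i < j \<and> j \<le> Suc n \<longrightarrow>
       face G (Suc n) i a (degen G n j x) = degen G (n - 1) (j - 1) (face G n i a x)) \<and>
    (\<forall>n i j a x. x \<in> cell G n \<and> 1 \<le> j \<and> j < i \<and> i \<le> Suc n \<longrightarrow>
       face G (Suc n) i a (degen G n j x) = degen G (n - 1) j (face G n (i - 1) a x)) \<and>
    (\<forall>n i a x. x \<in> cell G n \<and> 1 \<le> i \<and> i \<le> Suc n \<longrightarrow>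
       face G (Suc n) i a (degen G n i x) = x)"

definition cub_conn :: "'a cubical \<Rightarrow> bool" where
  "cub_conn G \<longleftrightarrow>
    \<comment> \<open>\<Gamma>^a_i \<Gamma>^b_j = \<Gamma>^b_(j+1) \<Gamma>^a_i, i < j\<close>
    (\<forall>n i j a b x. x \<in> cell G n \<and> 1 \<le> i \<and> i < j \<and> j \<le> n \<longrightarrow>
       conn G (Suc n) i a (conn G n j b x) = conn G (Suc n) (Suc j) b (conn G n i a x)) \<and>
    \<comment> \<open>\<Gamma>^a_i \<Gamma>^a_i = \<Gamma>^a_(i+1) \<Gamma>^a_i\<close>
    (\<forall>n i a x. x \<in> cell G n \<and> 1 \<le> i \<and> i \<le> n \<longrightarrow>
       conn G (Suc n) i a (conn G n i a x) = conn G (Suc n) (Suc i) a (conn G n i a x)) \<and>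
    \<comment> \<open>\<Gamma>^a_i \<epsilon>_j\<close>
    (\<forall>n i j a x. x \<in> cell G n \<and> 1 \<le> i \<and> i < j \<and> j \<le> Suc n \<longrightarrow>
       conn G (Suc n) i a (degen G n j x) = degen G (Suc n) (Suc j) (conn G n i a x)) \<and>
    (\<forall>n i j a x. x \<in> cell G n \<and> 1 \<le> j \<and> j < i \<and> i \<le> Suc n \<longrightarrow>
       conn G (Suc n) i a (degen G n j x) = degen G (Suc n) j (conn G n (i - 1) a x)) \<and>
    (\<forall>n j a x. x \<in> cell G n \<and> 1 \<le> j \<and> j \<le> Suc n \<longrightarrow>
       conn G (Suc n) j a (degen G n j x) = degen G (Suc n) (Suc j) (degen G n j x)) \<and>
    \<comment> \<open>\<partial>^a_i \<Gamma>^b_j\<close>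
    (\<forall>n i j a b x. x \<in> cell G n \<and> 1 \<le> i \<and> i < j \<and> j \<le> n \<longrightarrow>
       face G (Suc n) i a (conn G n j b x) = conn G (n - 1) (j - 1) b (face G n i a x)) \<and>
    (\<forall>n i j a b x. x \<in> cell G n \<and> 1 \<le> j \<and> Suc j < i \<and> i \<le> Suc n \<longrightarrow>
       face G (Suc n) i a (conn G n j b x) = conn G (n - 1) j b (face G n (i - 1) a x)) \<and>
    (\<forall>n j a x. x \<in> cell G n \<and> 1 \<le> j \<and> j \<le> n \<longrightarrow>
       face G (Suc n) j a (conn G n j a x) = x \<and>
       face G (Suc n) (Suc j) a (conn G n j a x) = x) \<and>
    (\<forall>n j a x. x \<in> cell G n \<and> 1 \<le> j \<and> j \<le> n \<longrightarrow>
       face G (Suc n) j a (conn G n j (\<not> a) x) = degen G (n - 1) j (face G n j a x) \<and>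
       face G (Suc n) (Suc j) a (conn G n j (\<not> a) x) = degen G (n - 1) j (face G n j a x))"

definition cub_comp :: "'a cubical \<Rightarrow> bool" where
  "cub_comp G \<longleftrightarrow>
    \<comment> \<open>faces of composites\<close>
    (\<forall>n j a b. composable G n j a b \<longrightarrow>
       face G n j False (comp G n j a b) = face G n j False a \<and>
       face G n j True (comp G n j a b) = face G n j True b) \<and>
    (\<forall>n i j c a b. composable G n j a b \<and> 1 \<le> i \<and> i < j \<longrightarrow>
       face G n i c (comp G n j a b) = comp G (n - 1) (j - 1) (face G n i c a) (face G n i c b)) \<and>
    (\<forall>n i j c a b. composable G n j a b \<and> j < i \<and> i \<le> n \<longrightarrow>
       face G n i c (comp G n j a b) = comp G (n - 1) j (face G n i c a) (face G n i c b)) \<and>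
    \<comment> \<open>interchange, i \<noteq> j\<close>
    (\<forall>n i j a b c d. i \<noteq> j \<and> composable G n i a b \<and> composable G n i c d \<and>
       composable G n j a c \<and> composable G n j b d \<longrightarrow>
       comp G n j (comp G n i a b) (comp G n i c d) = comp G n i (comp G n j a c) (comp G n j b d)) \<and>
    \<comment> \<open>degeneracies of composites\<close>
    (\<forall>n i j a b. composable G n j a b \<and> 1 \<le> i \<and> i \<le> j \<longrightarrow>
       degen G n i (comp G n j a b) = comp G (Suc n) (Suc j) (degen G n i a) (degen G n i b)) \<and>
    (\<forall>n i j a b. composable G n j a b \<and> j < i \<and> i \<le> Suc n \<longrightarrow>
       degen G n i (comp G n j a b) = comp G (Suc n) j (degen G n i a) (degen G n i b)) \<and>
    \<comment> \<open>connections of composites\<close>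
    (\<forall>n i j c a b. composable G n j a b \<and> 1 \<le> i \<and> i < j \<longrightarrow>
       conn G n i c (comp G n j a b) = comp G (Suc n) (Suc j) (conn G n i c a) (conn G n i c b)) \<and>
    (\<forall>n i j c a b. composable G n j a b \<and> j < i \<and> i \<le> n \<longrightarrow>
       conn G n i c (comp G n j a b) = comp G (Suc n) j (conn G n i c a) (conn G n i c b)) \<and>
    (\<forall>n j a b. composable G n j a b \<longrightarrow>
       conn G n j True (comp G n j a b) =
         comp G (Suc n) (Suc j)
           (comp G (Suc n) j (conn G n j True a) (degen G n j a))
           (comp G (Suc n) j (degen G n (Suc j) a) (conn G n j True b))) \<and>
    (\<forall>n j a b. composable G n j a b \<longrightarrow>
       conn G n j False (comp G n j a b) =
         comp G (Suc n) (Suc j)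
           (comp G (Suc n) j (conn G n j False a) (degen G n (Suc j) b))
           (comp G (Suc n) j (degen G n j b) (conn G n j False b))) \<and>
    \<comment> \<open>each \<circ>_j is a category with identities \<epsilon>_j y\<close>
    (\<forall>n j a b c. composable G n j a b \<and> composable G n j b c \<longrightarrow>
       comp G n j (comp G n j a b) c = comp G n j a (comp G n j b c)) \<and>
    (\<forall>n j x. x \<in> cell G n \<and> 1 \<le> j \<and> j \<le> n \<longrightarrow>
       comp G n j (degen G (n - 1) j (face G n j False x)) x = x \<and>
       comp G n j x (degen G (n - 1) j (face G n j True x)) = x) \<and>
    \<comment> \<open>\<Gamma>^+_i x \<circ>_i \<Gamma>^-_i x = \<epsilon>_(i+1) x,  \<Gamma>^+_i x \<circ>_(i+1) \<Gamma>^-_i x = \<epsilon>_i x\<close>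
    (\<forall>n i x. x \<in> cell G n \<and> 1 \<le> i \<and> i \<le> n \<longrightarrow>
       comp G (Suc n) i (conn G n i True x) (conn G n i False x) = degen G n (Suc i) x \<and>
       comp G (Suc n) (Suc i) (conn G n i True x) (conn G n i False x) = degen G n i x)"

definition cubical_omega_cat_conn :: "'a cubical \<Rightarrow> bool" where
  "cubical_omega_cat_conn G \<longleftrightarrow>
     cub_closed G \<and> cub_face_degen G \<and> cub_conn G \<and> cub_comp G"

text \<open>Folding operations. psi_i x = \<Gamma>^+_i \<partial>^-_(i+1) x \<circ>_(i+1) x \<circ>_(i+1) \<Gamma>^-_i \<partial>^+_(i+1) x
  on G_n (1 <= i <= n-1); Psi_r = psi_(r-1) ... psi_1; Phi_n = Psi_1 Psi_2 ... Psi_n.\<close>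

definition psi :: "'a cubical \<Rightarrow> nat \<Rightarrow> nat \<Rightarrow> 'a \<Rightarrow> 'a" where
  "psi G n i x =
     comp G n (Suc i)
       (comp G n (Suc i) (conn G (n - 1) i True (face G n (Suc i) False x)) x)
       (conn G (n - 1) i False (face G n (Suc i) True x))"

definition Psi :: "'a cubical \<Rightarrow> nat \<Rightarrow> nat \<Rightarrow> 'a \<Rightarrow> 'a" where
  "Psi G n r x = foldl (\<lambda>y i. psi G n i y) x [1..<r]"

definition Phi :: "'a cubical \<Rightarrow> nat \<Rightarrow> 'a \<Rightarrow> 'a" where
  "Phi G n x = foldr (\<lambda>r y. Psi G n r y) [1..<Suc n] x"

definition Phi_image :: "'a cubical \<Rightarrow> nat \<Rightarrow> 'a set" where
  "Phi_image G n = Phi G n ` cell G n"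

end

theory Submission
  imports Defs
begin

(* Call an n-cell x folded if every face \<partial>^\<alpha>_j x is degenerate in the directions 1, ..., j-1,
  i.e. fixed by \<epsilon>_l \<partial>^\<beta>_l for all l < j. If the (i+1)-faces of x are degenerate in direction i,
  the connections occurring in \<psi>_i x are the degeneracies \<epsilon>_(i+1) \<partial>^\<alpha>_(i+1) x, identities for
  \<circ>_(i+1); hence \<psi>_i, and with it \<Phi>_n, fixes folded cells. Conversely, if the faces of x in the
  directions > r are in this form, \<Psi>_r puts the r-faces into this form too without disturbing the
  faces in the directions > r, since each \<psi>_i passes the property from the i-faces to the
  (i+1)-faces. So \<Phi>_n = \<Psi>_1 ... \<Psi>_n folds every cell, and \<Phi>_n(G_n) is exactly the set of folded
  cells. Faces, degeneracies and composites of cells degenerate in the first k directions are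
  degenerate in the first k - 1 or k directions, which yields the closure properties. *)

lemma foldr_fixed_point: "(\<And>r. r \<in> set rs \<Longrightarrow> f r x = x) \<Longrightarrow> foldr f rs x = x"
  by (induction rs) auto

locale cubical_omega_category =
  fixes G :: "'a cubical"
  assumes axioms: "cubical_omega_cat_conn G"
begin

lemma face_in_cell: "x \<in> cell G n \<Longrightarrow> 1 \<le> i \<Longrightarrow> i \<le> n \<Longrightarrow> face G n i a x \<in> cell G (n - 1)"
  using axioms unfolding cubical_omega_cat_conn_def cub_closed_def by meson

lemma degen_in_cell: "x \<in> cell G n \<Longrightarrow> 1 \<le> i \<Longrightarrow> i \<le> Suc n \<Longrightarrow> degen G n i x \<in> cell G (Suc n)"
  using axioms unfolding cubical_omega_cat_conn_def cub_closed_def by meson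

lemma conn_in_cell: "x \<in> cell G n \<Longrightarrow> 1 \<le> i \<Longrightarrow> i \<le> n \<Longrightarrow> conn G n i a x \<in> cell G (Suc n)"
  using axioms unfolding cubical_omega_cat_conn_def cub_closed_def by meson

lemma comp_in_cell: "composable G n j a b \<Longrightarrow> comp G n j a b \<in> cell G n"
  using axioms unfolding cubical_omega_cat_conn_def cub_closed_def by meson

lemma face_face: "x \<in> cell G n \<Longrightarrow> 1 \<le> i \<Longrightarrow> i < j \<Longrightarrow> j \<le> n \<Longrightarrow>
    face G (n - 1) i a (face G n j b x) = face G (n - 1) (j - 1) b (face G n i a x)"
  using axioms unfolding cubical_omega_cat_conn_def cub_face_degen_def by meson

lemma degen_degen: "x \<in> cell G n \<Longrightarrow> 1 \<le> i \<Longrightarrow> i \<le> j \<Longrightarrow> j \<le> Suc n \<Longrightarrow>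
    degen G (Suc n) i (degen G n j x) = degen G (Suc n) (Suc j) (degen G n i x)"
  using axioms unfolding cubical_omega_cat_conn_def cub_face_degen_def by meson

lemma face_degen_less: "x \<in> cell G n \<Longrightarrow> 1 \<le> i \<Longrightarrow> i < j \<Longrightarrow> j \<le> Suc n \<Longrightarrow>
    face G (Suc n) i a (degen G n j x) = degen G (n - 1) (j - 1) (face G n i a x)"
  using axioms unfolding cubical_omega_cat_conn_def cub_face_degen_def by meson

lemma face_degen_greater: "x \<in> cell G n \<Longrightarrow> 1 \<le> j \<Longrightarrow> j < i \<Longrightarrow> i \<le> Suc n \<Longrightarrow>
    face G (Suc n) i a (degen G n j x) = degen G (n - 1) j (face G n (i - 1) a x)"
  using axioms unfolding cubical_omega_cat_conn_def cub_face_degen_def by meson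

lemma face_degen_same: "x \<in> cell G n \<Longrightarrow> 1 \<le> i \<Longrightarrow> i \<le> Suc n \<Longrightarrow>
    face G (Suc n) i a (degen G n i x) = x"
  using axioms unfolding cubical_omega_cat_conn_def cub_face_degen_def by meson

lemma conn_degen_same: "x \<in> cell G n \<Longrightarrow> 1 \<le> j \<Longrightarrow> j \<le> Suc n \<Longrightarrow>
    conn G (Suc n) j a (degen G n j x) = degen G (Suc n) (Suc j) (degen G n j x)"
  using axioms unfolding cubical_omega_cat_conn_def cub_conn_def by meson

lemma face_conn_greater: "x \<in> cell G n \<Longrightarrow> 1 \<le> j \<Longrightarrow> Suc j < i \<Longrightarrow> i \<le> Suc n \<Longrightarrow>
    face G (Suc n) i a (conn G n j b x) = conn G (n - 1) j b (face G n (i - 1) a x)"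
  using axioms unfolding cubical_omega_cat_conn_def cub_conn_def by meson

lemma face_Suc_conn_same: "x \<in> cell G n \<Longrightarrow> 1 \<le> j \<Longrightarrow> j \<le> n \<Longrightarrow>
    face G (Suc n) (Suc j) a (conn G n j a x) = x"
  using axioms unfolding cubical_omega_cat_conn_def cub_conn_def by meson

lemma face_Suc_conn_opposite: "x \<in> cell G n \<Longrightarrow> 1 \<le> j \<Longrightarrow> j \<le> n \<Longrightarrow>
    face G (Suc n) (Suc j) a (conn G n j (\<not> a) x) = degen G (n - 1) j (face G n j a x)"
  using axioms unfolding cubical_omega_cat_conn_def cub_conn_def by meson

lemma face_comp_lower: "composable G n j a b \<Longrightarrow>
    face G n j False (comp G n j a b) = face G n j False a"
  using axioms unfolding cubical_omega_cat_conn_def cub_comp_def by meson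

lemma face_comp_upper: "composable G n j a b \<Longrightarrow>
    face G n j True (comp G n j a b) = face G n j True b"
  using axioms unfolding cubical_omega_cat_conn_def cub_comp_def by meson

lemma face_comp_less: "composable G n j a b \<Longrightarrow> 1 \<le> i \<Longrightarrow> i < j \<Longrightarrow>
    face G n i c (comp G n j a b) = comp G (n - 1) (j - 1) (face G n i c a) (face G n i c b)"
  using axioms unfolding cubical_omega_cat_conn_def cub_comp_def by meson

lemma face_comp_greater: "composable G n j a b \<Longrightarrow> j < i \<Longrightarrow> i \<le> n \<Longrightarrow>
    face G n i c (comp G n j a b) = comp G (n - 1) j (face G n i c a) (face G n i c b)"
  using axioms unfolding cubical_omega_cat_conn_def cub_comp_def by meson

lemma degen_comp_le: "composable G n j a b \<Longrightarrow> 1 \<le> i \<Longrightarrow> i \<le> j \<Longrightarrow>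
    degen G n i (comp G n j a b) = comp G (Suc n) (Suc j) (degen G n i a) (degen G n i b)"
  using axioms unfolding cubical_omega_cat_conn_def cub_comp_def by meson

lemma comp_left_unit: "x \<in> cell G n \<Longrightarrow> 1 \<le> j \<Longrightarrow> j \<le> n \<Longrightarrow>
    comp G n j (degen G (n - 1) j (face G n j False x)) x = x"
  using axioms unfolding cubical_omega_cat_conn_def cub_comp_def by meson

lemma comp_right_unit: "x \<in> cell G n \<Longrightarrow> 1 \<le> j \<Longrightarrow> j \<le> n \<Longrightarrow>
    comp G n j x (degen G (n - 1) j (face G n j True x)) = x"
  using axioms unfolding cubical_omega_cat_conn_def cub_comp_def by meson

lemma composable_face_less:
  assumes ab: "composable G n j a b" and i: "1 \<le> i" "i < j"
  shows "composable G (n - 1) (j - 1) (face G n i c a) (face G n i c b)"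
proof -
  have a: "a \<in> cell G n" and b: "b \<in> cell G n" and j: "j \<le> n"
    and ab_eq: "face G n j True a = face G n j False b"
    using ab unfolding composable_def by auto
  have "face G (n - 1) (j - 1) True (face G n i c a) = face G (n - 1) i c (face G n j True a)"
    using face_face[OF a i j] by simp
  also have "\<dots> = face G (n - 1) (j - 1) False (face G n i c b)"
    using face_face[OF b i j] ab_eq by simp
  finally show ?thesis
    unfolding composable_def using face_in_cell a b i j by auto
qed

lemma composable_face_greater:
  assumes ab: "composable G n j a b" and i: "j < i" "i \<le> n"
  shows "composable G (n - 1) j (face G n i c a) (face G n i c b)"
proof -
  have a: "a \<in> cell G n" and b: "b \<in> cell G n" and j: "1 \<le> j"
    and ab_eq: "face G n j True a = face G n j False b"
    using ab unfolding composable_def by auto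
  have "face G (n - 1) j True (face G n i c a) = face G (n - 1) (i - 1) c (face G n j True a)"
    using face_face[OF a j i] by simp
  also have "\<dots> = face G (n - 1) j False (face G n i c b)"
    using face_face[OF b j i] ab_eq by simp
  finally show ?thesis
    unfolding composable_def using face_in_cell a b i j by auto
qed

text \<open>Equivalently, \<open>y\<close> lies in the image of \<open>\<epsilon>\<^sub>1\<^sup>k\<close>.\<close>

definition degen_upto :: "nat \<Rightarrow> nat \<Rightarrow> 'a \<Rightarrow> bool" where
  "degen_upto p k y \<longleftrightarrow> y \<in> cell G p \<and> k \<le> p \<and>
     (\<forall>l a. 1 \<le> l \<and> l \<le> k \<longrightarrow> y = degen G (p - 1) l (face G p l a y))"

lemma degen_upto_0 [simp]: "degen_upto p 0 y \<longleftrightarrow> y \<in> cell G p"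
  unfolding degen_upto_def by auto

lemma degen_upto_mono: "degen_upto p k y \<Longrightarrow> k' \<le> k \<Longrightarrow> degen_upto p k' y"
  unfolding degen_upto_def by auto

lemma degen_upto_in_cell: "degen_upto p k y \<Longrightarrow> y \<in> cell G p"
  unfolding degen_upto_def by auto

lemma degen_upto_eq: "degen_upto p k y \<Longrightarrow> 1 \<le> l \<Longrightarrow> l \<le> k \<Longrightarrow>
    y = degen G (p - 1) l (face G p l a y)"
  unfolding degen_upto_def by auto

lemma degen_upto_face_cases:
  assumes y: "degen_upto (Suc q) k y" and i: "1 \<le> i" "i \<le> Suc q"
  shows "degen_upto q (if i \<le> k then k - 1 else k) (face G (Suc q) i a y)"
  unfolding degen_upto_def
proof (intro conjI allI impI)
  have yc: "y \<in> cell G (Suc q)" and k: "k \<le> Suc q"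
    using y unfolding degen_upto_def by auto
  show "face G (Suc q) i a y \<in> cell G q"
    using face_in_cell[OF yc i] by simp
  show "(if i \<le> k then k - 1 else k) \<le> q"
    using k i by auto
  fix l b assume l: "1 \<le> l \<and> l \<le> (if i \<le> k then k - 1 else k)"
  show "face G (Suc q) i a y = degen G (q - 1) l (face G q l b (face G (Suc q) i a y))"
  proof (cases "l < i")
    case True
    define w where "w = face G (Suc q) l b y"
    have w: "w \<in> cell G q"
      using face_in_cell[OF yc, of l b] l True i unfolding w_def by simp
    have "y = degen G q l w"
      using degen_upto_eq[OF y, of l b] l True unfolding w_def by (simp split: if_splits)
    then have "face G (Suc q) i a y = degen G (q - 1) l (face G q (i - 1) a w)"
      using face_degen_greater[OF w, of l i a] l True i by simp
    also have "face G q (i - 1) a w = face G q l b (face G (Suc q) i a y)"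
      using face_face[OF yc, of l i b a] l True i unfolding w_def by simp
    finally show ?thesis .
  next
    case False
    then have lk: "Suc l \<le> k" "i \<le> l"
      using l by (auto split: if_splits)
    define w where "w = face G (Suc q) (Suc l) b y"
    have w: "w \<in> cell G q"
      using face_in_cell[OF yc, of "Suc l" b] lk k unfolding w_def by simp
    have "y = degen G q (Suc l) w"
      using degen_upto_eq[OF y, of "Suc l" b] lk unfolding w_def by simp
    then have "face G (Suc q) i a y = degen G (q - 1) l (face G q i a w)"
      using face_degen_less[OF w, of i "Suc l" a] lk i k by simp
    also have "face G q i a w = face G q l b (face G (Suc q) i a y)"
      using face_face[OF yc, of i "Suc l" a b] lk i k unfolding w_def by simp
    finally show ?thesis .
  qed
qed

lemma degen_upto_face_le:
  "degen_upto (Suc q) k y \<Longrightarrow> 1 \<le> i \<Longrightarrow> i \<le> k \<Longrightarrow>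
    degen_upto q (k - 1) (face G (Suc q) i a y)"
  using degen_upto_face_cases[of q k y i a] unfolding degen_upto_def by auto

lemma degen_upto_face_greater:
  "degen_upto (Suc q) k y \<Longrightarrow> k < i \<Longrightarrow> i \<le> Suc q \<Longrightarrow>
    degen_upto q k (face G (Suc q) i a y)"
  using degen_upto_face_cases[of q k y i a] by simp

lemma degen_upto_degen_cases:
  assumes w: "degen_upto p k w" and m: "1 \<le> m" "m \<le> Suc p"
  shows "degen_upto (Suc p) (if m \<le> Suc k then Suc k else k) (degen G p m w)"
  unfolding degen_upto_def
proof (intro conjI allI impI)
  have wc: "w \<in> cell G p" and k: "k \<le> p"
    using w unfolding degen_upto_def by auto
  show "degen G p m w \<in> cell G (Suc p)"
    using degen_in_cell[OF wc m] .
  show "(if m \<le> Suc k then Suc k else k) \<le> Suc p"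
    using k by auto
  fix l b assume l: "1 \<le> l \<and> l \<le> (if m \<le> Suc k then Suc k else k)"
  show "degen G p m w = degen G (Suc p - 1) l (face G (Suc p) l b (degen G p m w))"
  proof (cases rule: linorder_cases[of l m])
    case less
    then have lk: "l \<le> k"
      using l by (auto split: if_splits)
    then obtain q where p: "p = Suc q"
      using k l by (cases p) auto
    define u where "u = face G p l b w"
    have u: "u \<in> cell G q"
      using face_in_cell[OF wc, of l b] l lk k p unfolding u_def by simp
    have "degen G (Suc p - 1) l (face G (Suc p) l b (degen G p m w)) = degen G p l (degen G q (m - 1) u)"
      using face_degen_less[OF wc, of l m b] l less m p unfolding u_def by simp
    also have "\<dots> = degen G p m (degen G q l u)"
      using degen_degen[OF u, of l "m - 1"] l less m p by simp
    also have "degen G q l u = w"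
      using degen_upto_eq[OF w, of l b] l lk p unfolding u_def by simp
    finally show ?thesis ..
  next
    case equal
    then show ?thesis
      using face_degen_same[OF wc m] by simp
  next
    case greater
    then have lk: "l - 1 \<le> k" "1 \<le> l - 1"
      using l m by (auto split: if_splits)
    then obtain q where p: "p = Suc q"
      using k by (cases p) auto
    define u where "u = face G p (l - 1) b w"
    have u: "u \<in> cell G q"
      using face_in_cell[OF wc, of "l - 1" b] lk k p unfolding u_def by simp
    have "degen G (Suc p - 1) l (face G (Suc p) l b (degen G p m w)) = degen G p l (degen G q m u)"
      using face_degen_greater[OF wc, of m l b] lk k m greater p unfolding u_def by simp
    also have "\<dots> = degen G p m (degen G q (l - 1) u)"
      using degen_degen[OF u, of m "l - 1"] lk k m greater p by simp
    also have "degen G q (l - 1) u = w"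
      using degen_upto_eq[OF w, of "l - 1" b] lk p unfolding u_def by simp
    finally show ?thesis ..
  qed
qed

lemma degen_upto_degen_le:
  "degen_upto p k w \<Longrightarrow> 1 \<le> m \<Longrightarrow> m \<le> Suc k \<Longrightarrow>
    degen_upto (Suc p) (Suc k) (degen G p m w)"
  using degen_upto_degen_cases[of p k w m] unfolding degen_upto_def by auto

lemma degen_upto_degen:
  assumes "degen_upto p k w" "1 \<le> m" "m \<le> Suc p"
  shows "degen_upto (Suc p) k (degen G p m w)"
  by (rule degen_upto_mono[OF degen_upto_degen_cases[OF assms]]) simp

lemma degen_upto_comp:
  assumes a: "degen_upto p k a" and b: "degen_upto p k b"
    and ab: "composable G p m a b" and k: "k < m"
  shows "degen_upto p k (comp G p m a b)"
  unfolding degen_upto_def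
proof (intro conjI allI impI)
  have m: "1 \<le> m" "m \<le> p"
    using ab unfolding composable_def by auto
  then obtain q where p: "p = Suc q"
    by (cases p) auto
  show "comp G p m a b \<in> cell G p"
    using comp_in_cell[OF ab] .
  show "k \<le> p"
    using k m by simp
  fix l c assume l: "1 \<le> l \<and> l \<le> k"
  have faces: "composable G q (m - 1) (face G p l c a) (face G p l c b)"
    using composable_face_less[OF ab, of l c] l k p by simp
  have "degen G (p - 1) l (face G p l c (comp G p m a b))
      = degen G q l (comp G q (m - 1) (face G p l c a) (face G p l c b))"
    using face_comp_less[OF ab, of l c] l k p by simp
  also have "\<dots> = comp G p m (degen G q l (face G p l c a)) (degen G q l (face G p l c b))"
    using degen_comp_le[OF faces, of l] l k m p by (simp add: le_diff_conv2)
  also have "\<dots> = comp G p m a b"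
    using degen_upto_eq[OF a, of l c] degen_upto_eq[OF b, of l c] l p by simp
  finally show "comp G p m a b = degen G (p - 1) l (face G p l c (comp G p m a b))" ..
qed

lemma comp_degen_upto_left:
  assumes a: "degen_upto p k a" and ab: "composable G p m a b" and m: "1 \<le> m" "m \<le> k"
  shows "comp G p m a b = b"
proof -
  have b: "b \<in> cell G p" and "m \<le> p" and ab_eq: "face G p m True a = face G p m False b"
    using ab unfolding composable_def by auto
  have "a = degen G (p - 1) m (face G p m False b)"
    using degen_upto_eq[OF a m, of True] ab_eq by simp
  then show ?thesis
    using comp_left_unit[OF b m(1) \<open>m \<le> p\<close>] by simp
qed

lemma psi_composable:
  assumes y: "y \<in> cell G n" and i: "1 \<le> i" "Suc i \<le> n"
  shows "composable G n (Suc i) (conn G (n - 1) i True (face G n (Suc i) False y)) y"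
    and "composable G n (Suc i)
           (comp G n (Suc i) (conn G (n - 1) i True (face G n (Suc i) False y)) y)
           (conn G (n - 1) i False (face G n (Suc i) True y))"
proof -
  obtain q where n: "n = Suc q"
    using i by (cases n) auto
  have faces: "face G n (Suc i) c y \<in> cell G q" for c
    using face_in_cell[OF y, of "Suc i" c] i n by simp
  have conns: "conn G q i c (face G n (Suc i) d y) \<in> cell G n" for c d
    using conn_in_cell[OF faces, of i c] i n by simp
  show left: "composable G n (Suc i) (conn G (n - 1) i True (face G n (Suc i) False y)) y"
    unfolding composable_def
    using conns face_Suc_conn_same[OF faces, of i True] y i n by simp
  show "composable G n (Suc i)
          (comp G n (Suc i) (conn G (n - 1) i True (face G n (Suc i) False y)) y)
          (conn G (n - 1) i False (face G n (Suc i) True y))"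
    unfolding composable_def
    using conns face_Suc_conn_same[OF faces, of i False] comp_in_cell[OF left]
      face_comp_upper[OF left] i n
    by simp
qed

lemma psi_in_cell: "y \<in> cell G n \<Longrightarrow> 1 \<le> i \<Longrightarrow> Suc i \<le> n \<Longrightarrow> psi G n i y \<in> cell G n"
  unfolding psi_def using comp_in_cell psi_composable by blast

lemma conn_degen_upto:
  assumes z: "degen_upto (Suc r) i z" and i: "1 \<le> i"
  shows "conn G (Suc r) i c z = degen G (Suc r) (Suc i) z"
proof -
  have "i \<le> Suc r"
    using z unfolding degen_upto_def by simp
  then have u: "face G (Suc r) i c z \<in> cell G r"
    using face_in_cell[OF degen_upto_in_cell[OF z] i] by simp
  have z_eq: "degen G r i (face G (Suc r) i c z) = z"
    using degen_upto_eq[OF z i order_refl, unfolded diff_Suc_1, symmetric] .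
  show ?thesis
    using conn_degen_same[OF u, of i c] i \<open>i \<le> Suc r\<close> unfolding z_eq by simp
qed

lemma psi_eq_self:
  assumes y: "y \<in> cell G n" and i: "1 \<le> i" "Suc i \<le> n"
    and faces_degen: "\<And>c. degen_upto (n - 1) i (face G n (Suc i) c y)"
  shows "psi G n i y = y"
proof -
  define r where "r = n - 2"
  have n: "n = Suc (Suc r)"
    using i unfolding r_def by simp
  have "psi G n i y = comp G n (Suc i)
      (comp G n (Suc i) (degen G (n - 1) (Suc i) (face G n (Suc i) False y)) y)
      (degen G (n - 1) (Suc i) (face G n (Suc i) True y))"
    unfolding psi_def using conn_degen_upto faces_degen i n by simp
  also have "\<dots> = y"
    using comp_left_unit[OF y, of "Suc i"] comp_right_unit[OF y, of "Suc i"] i by simp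
  finally show ?thesis .
qed

lemma face_psi_greater:
  assumes y: "y \<in> cell G n" and i: "1 \<le> i" "Suc i < j" "j \<le> n"
  shows "face G n j a (psi G n i y) = psi G (n - 1) i (face G n j a y)"
proof -
  obtain q where n: "n = Suc q"
    using i by (cases n) auto
  have faces: "face G n (Suc i) c y \<in> cell G q" for c
    using face_in_cell[OF y, of "Suc i" c] i n by simp
  have face_conn: "face G n j a (conn G q i c (face G n (Suc i) d y))
      = conn G (q - 1) i c (face G (n - 1) (Suc i) d (face G n j a y))" for c d
    using face_conn_greater[OF faces, of i j a c] face_face[OF y, of "Suc i" j d a] i n by simp
  show ?thesis
    unfolding psi_def
    using face_comp_greater[OF psi_composable(2)[OF y i(1)], of j a]
      face_comp_greater[OF psi_composable(1)[OF y i(1)], of j a] face_conn i n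
    by simp
qed

lemma face_Suc_psi:
  assumes y: "y \<in> cell G n" and i: "1 \<le> i" "Suc i \<le> n"
  shows "face G n (Suc i) a (psi G n i y) = degen G (n - 2) i (face G (n - 1) i a (face G n (Suc i) a y))"
proof -
  obtain q where n: "n = Suc q"
    using i by (cases n) auto
  have faces: "face G n (Suc i) c y \<in> cell G q" for c
    using face_in_cell[OF y, of "Suc i" c] i n by simp
  show ?thesis
  proof (cases a)
    case True
    then show ?thesis
      unfolding psi_def
      using face_comp_upper[OF psi_composable(2)[OF y i]] face_Suc_conn_opposite[OF faces, of i True] i n
      by simp
  next
    case False
    then show ?thesis
      unfolding psi_def
      using face_comp_lower[OF psi_composable(2)[OF y i]] face_comp_lower[OF psi_composable(1)[OF y i]]
        face_Suc_conn_opposite[OF faces, of i False] i n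
      by simp
  qed
qed

definition folded_from :: "nat \<Rightarrow> nat \<Rightarrow> 'a \<Rightarrow> bool" where
  "folded_from n r x \<longleftrightarrow> x \<in> cell G n \<and>
     (\<forall>j a. r \<le> j \<and> j \<le> n \<longrightarrow> degen_upto (n - 1) (j - 1) (face G n j a x))"

abbreviation folded :: "nat \<Rightarrow> 'a \<Rightarrow> bool" where
  "folded n \<equiv> folded_from n 1"

lemma folded_from_in_cell: "folded_from n r x \<Longrightarrow> x \<in> cell G n"
  unfolding folded_from_def by auto

lemma folded_from_face: "folded_from n r x \<Longrightarrow> r \<le> j \<Longrightarrow> j \<le> n \<Longrightarrow>
    degen_upto (n - 1) (j - 1) (face G n j a x)"
  unfolding folded_from_def by auto

lemma folded_from_psi:
  assumes y: "folded_from n r y" and i: "1 \<le> i" "Suc i < r" "Suc i \<le> n"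
  shows "folded_from n r (psi G n i y)"
  unfolding folded_from_def
proof (intro conjI allI impI)
  have yc: "y \<in> cell G n"
    using folded_from_in_cell[OF y] .
  show "psi G n i y \<in> cell G n"
    using psi_in_cell[OF yc i(1,3)] .
  fix j a assume j: "r \<le> j \<and> j \<le> n"
  define m where "m = n - 2"
  have n: "n = Suc (Suc m)"
    using i j unfolding m_def by arith
  have v: "degen_upto (Suc m) (j - 1) (face G n j a y)"
    using folded_from_face[OF y, of j a] j n by simp
  have "psi G (Suc m) i (face G n j a y) = face G n j a y"
  proof (rule psi_eq_self)
    show "face G n j a y \<in> cell G (Suc m)"
      using degen_upto_in_cell[OF v] .
    show "1 \<le> i" "Suc i \<le> Suc m"
      using i j n by auto
    fix c
    have "degen_upto m (j - 1 - 1) (face G (Suc m) (Suc i) c (face G n j a y))"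
      using degen_upto_face_le[OF v, of "Suc i" c] i j by auto
    then have "degen_upto m i (face G (Suc m) (Suc i) c (face G n j a y))"
      by (rule degen_upto_mono) (use i j in arith)
    then show "degen_upto (Suc m - 1) i (face G (Suc m) (Suc i) c (face G n j a y))"
      by simp
  qed
  then have "face G n j a (psi G n i y) = face G n j a y"
    using face_psi_greater[OF yc i(1), of j a] i j n by simp
  then show "degen_upto (n - 1) (j - 1) (face G n j a (psi G n i y))"
    using v n by simp
qed

lemma degen_upto_face_Suc_psi:
  assumes y: "y \<in> cell G n" and i: "1 \<le> i" "Suc i \<le> n"
    and face_degen: "degen_upto (n - 1) (i - 1) (face G n i a y)"
  shows "degen_upto (n - 1) i (face G n (Suc i) a (psi G n i y))"
proof -
  define m where "m = n - 2"
  have n: "n = Suc (Suc m)"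
    using i unfolding m_def by simp
  have face_eq: "face G n (Suc i) a (psi G n i y) = degen G m i (face G (Suc m) i a (face G n i a y))"
    using face_Suc_psi[OF y i, of a] face_face[OF y, of i "Suc i" a a] i n by simp
  have "degen_upto m (i - 1) (face G (Suc m) i a (face G n i a y))"
    using degen_upto_face_greater[of m "i - 1" "face G n i a y" i a] face_degen i n by simp
  then have "degen_upto (Suc m) i (degen G m i (face G (Suc m) i a (face G n i a y)))"
    using degen_upto_degen_le[of m "i - 1" _ i] i by simp
  then show ?thesis
    using face_eq n by simp
qed

lemma Psi_Suc: "1 \<le> r \<Longrightarrow> Psi G n (Suc r) x = psi G n r (Psi G n r x)"
  unfolding Psi_def by simp

lemma Psi_folds_face:
  assumes x: "folded_from n (Suc r) x" and r: "r \<le> n" and i: "1 \<le> i" "i \<le> r"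
  shows "folded_from n (Suc r) (Psi G n i x) \<and>
    (\<forall>a. degen_upto (n - 1) (i - 1) (face G n i a (Psi G n i x)))"
  using i
proof (induction i rule: dec_induct)
  case base
  have "face G n 1 a x \<in> cell G (n - 1)" for a
    using face_in_cell[OF folded_from_in_cell[OF x]] base r by simp
  then show ?case
    using x by (simp add: Psi_def)
next
  case (step i)
  define y where "y = Psi G n i x"
  have y: "folded_from n (Suc r) y" "\<And>a. degen_upto (n - 1) (i - 1) (face G n i a y)"
    using step unfolding y_def by auto
  have "Psi G n (Suc i) x = psi G n i y"
    unfolding y_def using step by (simp add: Psi_Suc)
  then show ?case
    using folded_from_psi[OF y(1), of i] degen_upto_face_Suc_psi[OF folded_from_in_cell[OF y(1)], of i]
      y(2) step r
    by simp
qed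

lemma folded_from_Psi:
  assumes x: "folded_from n (Suc r) x" and r: "1 \<le> r" "r \<le> n"
  shows "folded_from n r (Psi G n r x)"
  unfolding folded_from_def
proof (intro conjI allI impI)
  have Psi: "folded_from n (Suc r) (Psi G n r x)"
    and face_r: "\<And>a. degen_upto (n - 1) (r - 1) (face G n r a (Psi G n r x))"
    using Psi_folds_face[OF x r(2) r(1) order_refl] by auto
  show "Psi G n r x \<in> cell G n"
    using folded_from_in_cell[OF Psi] .
  fix j a assume j: "r \<le> j \<and> j \<le> n"
  show "degen_upto (n - 1) (j - 1) (face G n j a (Psi G n r x))"
  proof (cases "j = r")
    case False
    then show ?thesis
      using folded_from_face[OF Psi, of j a] j by simp
  qed (use face_r in simp)
qed

lemma folded_Phi:
  assumes x: "x \<in> cell G n"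
  shows "folded n (Phi G n x)"
proof -
  have "folded_from n s (foldr (Psi G n) [s..<Suc n] x)" if "1 \<le> s" "s \<le> Suc n" for s
    using that(2)
  proof (induction s rule: inc_induct)
    case base
    then show ?case
      using x unfolding folded_from_def by auto
  next
    case (step r)
    have "foldr (Psi G n) [r..<Suc n] x = Psi G n r (foldr (Psi G n) [Suc r..<Suc n] x)"
      using step.hyps by (simp add: upt_conv_Cons del: upt_Suc)
    then show ?case
      using folded_from_Psi[OF step.IH] step.hyps that(1) by (simp del: upt_Suc)
  qed
  then show ?thesis
    unfolding Phi_def by simp
qed

lemma Phi_eq_self:
  assumes x: "folded n x"
  shows "Phi G n x = x"
proof -
  have xc: "x \<in> cell G n"
    using folded_from_in_cell[OF x] .
  have Psi_eq: "Psi G n r x = x" if "r \<le> n" for r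
    using that
  proof (induction r)
    case (Suc r)
    show ?case
    proof (cases "r = 0")
      case False
      have "psi G n r x = x"
        by (rule psi_eq_self[OF xc]) (use False Suc.prems folded_from_face[OF x, of "Suc r"] in auto)
      then show ?thesis
        using Suc False by (simp add: Psi_Suc)
    qed (simp add: Psi_def)
  qed (simp add: Psi_def)
  show ?thesis
    unfolding Phi_def by (rule foldr_fixed_point) (auto intro: Psi_eq)
qed

lemma Phi_image_eq_folded: "Phi_image G n = {x. folded n x}"
proof
  show "Phi_image G n \<subseteq> {x. folded n x}"
    unfolding Phi_image_def using folded_Phi by auto
  show "{x. folded n x} \<subseteq> Phi_image G n"
  proof
    fix x assume "x \<in> {x. folded n x}"
    then have x: "folded n x" by simp
    have "x = Phi G n x"
      using Phi_eq_self[OF x] by simp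
    then show "x \<in> Phi_image G n"
      unfolding Phi_image_def using folded_from_in_cell[OF x] by (rule image_eqI)
  qed
qed

lemma folded_face:
  assumes x: "folded n x" and i: "1 \<le> i" "i \<le> n"
  shows "folded (n - 1) (face G n i a x)"
  unfolding folded_from_def
proof (intro conjI allI impI)
  have xc: "x \<in> cell G n"
    using folded_from_in_cell[OF x] .
  show "face G n i a x \<in> cell G (n - 1)"
    using face_in_cell[OF xc i] .
  fix j b assume j: "1 \<le> j \<and> j \<le> n - 1"
  define q where "q = n - 2"
  have n: "n = Suc (Suc q)"
    using i j unfolding q_def by arith
  show "degen_upto (n - 1 - 1) (j - 1) (face G (n - 1) j b (face G n i a x))"
  proof (cases "i \<le> j")
    case True
    have "degen_upto (Suc q) j (face G n (Suc j) b x)"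
      using folded_from_face[OF x, of "Suc j" b] j n by simp
    then have "degen_upto q (j - 1) (face G (Suc q) i a (face G n (Suc j) b x))"
      using degen_upto_face_le[of q j _ i a] i True by simp
    then show ?thesis
      using face_face[OF xc, of i "Suc j" a b] i j True n by simp
  next
    case False
    have "degen_upto (Suc q) (j - 1) (face G n j b x)"
      using folded_from_face[OF x, of j b] j n by simp
    then have "degen_upto q (j - 1) (face G (Suc q) (i - 1) a (face G n j b x))"
      using degen_upto_face_greater[of q "j - 1" _ "i - 1" a] i j False n by simp
    then show ?thesis
      using face_face[OF xc, of j i b a] i j False n by simp
  qed
qed

lemma folded_degen:
  assumes z: "folded q z" and z_degen: "degen_upto q (i - 1) z" and i: "1 \<le> i" "i \<le> Suc q"
  shows "folded (Suc q) (degen G q i z)"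
  unfolding folded_from_def
proof (intro conjI allI impI)
  have zc: "z \<in> cell G q"
    using folded_from_in_cell[OF z] .
  show "degen G q i z \<in> cell G (Suc q)"
    using degen_in_cell[OF zc i] .
  fix j b assume j: "1 \<le> j \<and> j \<le> Suc q"
  show "degen_upto (Suc q - 1) (j - 1) (face G (Suc q) j b (degen G q i z))"
  proof (cases rule: linorder_cases[of j i])
    case less
    have "degen_upto (q - 1) (j - 1) (face G q j b z)"
      using folded_from_face[OF z, of j b] j less i by simp
    then have "degen_upto (Suc (q - 1)) (j - 1) (degen G (q - 1) (i - 1) (face G q j b z))"
      using degen_upto_degen[of "q - 1" "j - 1" _ "i - 1"] j less i by simp
    then show ?thesis
      using face_degen_less[OF zc, of j i b] j less i by simp
  next
    case equal
    then show ?thesis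
      using face_degen_same[OF zc i, of b] z_degen by simp
  next
    case greater
    define l where "l = j - 2"
    have jl: "j = Suc (Suc l)"
      using greater i unfolding l_def by simp
    obtain r where q: "q = Suc r"
      using greater i j by (cases q) auto
    have "degen_upto r l (face G q (Suc l) b z)"
      using folded_from_face[OF z, of "Suc l" b] j jl q by simp
    then have "degen_upto q (Suc l) (degen G r i (face G q (Suc l) b z))"
      using degen_upto_degen_le[of r l _ i] greater i jl q by simp
    then show ?thesis
      using face_degen_greater[OF zc, of i j b] j greater i jl q by simp
  qed
qed

lemma folded_comp:
  assumes x: "folded n x" and y: "folded n y" and xy: "composable G n i x y"
  shows "folded n (comp G n i x y)"
  unfolding folded_from_def
proof (intro conjI allI impI)
  have i: "1 \<le> i" "i \<le> n"
    using xy unfolding composable_def by auto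
  show "comp G n i x y \<in> cell G n"
    using comp_in_cell[OF xy] .
  fix j b assume j: "1 \<le> j \<and> j \<le> n"
  have x_face: "degen_upto (n - 1) (j - 1) (face G n j b x)"
    and y_face: "degen_upto (n - 1) (j - 1) (face G n j b y)"
    using folded_from_face[OF x, of j b] folded_from_face[OF y, of j b] j by auto
  show "degen_upto (n - 1) (j - 1) (face G n j b (comp G n i x y))"
  proof (cases rule: linorder_cases[of j i])
    case less
    have faces: "composable G (n - 1) (i - 1) (face G n j b x) (face G n j b y)"
      using composable_face_less[OF xy, of j b] j less by simp
    show ?thesis
      using degen_upto_comp[OF x_face y_face faces] face_comp_less[OF xy, of j b] j less by auto
  next
    case equal
    then show ?thesis
      using face_comp_lower[OF xy] face_comp_upper[OF xy] x_face y_face by (cases b) auto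
  next
    case greater
    have "composable G (n - 1) i (face G n j b x) (face G n j b y)"
      using composable_face_greater[OF xy, of j b] j greater by simp
    then have "comp G (n - 1) i (face G n j b x) (face G n j b y) = face G n j b y"
      using comp_degen_upto_left[OF x_face] i greater by simp
    then show ?thesis
      using face_comp_greater[OF xy, of j b] j greater y_face by simp
  qed
qed

end

theorem proposition3p7:
  fixes G :: "'a cubical"
  assumes "cubical_omega_cat_conn G"
  shows "(\<forall>n i a x. 1 \<le> i \<and> i \<le> n \<and> x \<in> Phi_image G n \<longrightarrow>
            face G n i a x \<in> Phi_image G (n - 1))
       \<and> (\<forall>n x. x \<in> Phi_image G n \<longrightarrow> degen G n 1 x \<in> Phi_image G (Suc n))
       \<and> (\<forall>n i a x. 1 \<le> i \<and> i \<le> n \<and> x \<in> Phi_image G n \<longrightarrow>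
            degen G (n - 1) i (face G n i a x) \<in> Phi_image G n)
       \<and> (\<forall>n i x y. 1 \<le> i \<and> i \<le> n \<and> x \<in> Phi_image G n \<and> y \<in> Phi_image G n \<and>
            face G n i True x = face G n i False y \<longrightarrow>
            comp G n i x y \<in> Phi_image G n)"
proof -
  interpret cubical_omega_category G
    using assms by unfold_locales
  have degen_1: "folded (Suc n) (degen G n 1 x)" if "folded n x" for n x
    using folded_degen[OF that, of 1] folded_from_in_cell[OF that] by simp
  have degen_face: "folded n (degen G (n - 1) i (face G n i a x))"
    if "folded n x" "1 \<le> i" "i \<le> n" for n i a x
    using folded_degen[OF folded_face[OF that] folded_from_face[OF that(1), of i a]] that by simp
  have comp: "folded n (comp G n i x y)"
    if "folded n x" "folded n y" "1 \<le> i" "i \<le> n" "face G n i True x = face G n i False y"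
    for n i x y
    using folded_comp[OF that(1,2)] that folded_from_in_cell unfolding composable_def by blast
  show ?thesis
    unfolding Phi_image_eq_folded using folded_face degen_1 degen_face comp by auto
qed

end
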